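(* Assume $\alpha\neq0$ and $w=\tfrac12(s+t)\notin\mathbb{Z}$. Then for every positive integer $n$, every $u\in\mathbb{C}$ and all $a,c\in\mathbb{Z}$, each of the two sets $$\{\psi^{(n)}(u)^a_b\}_{b\in\{a-n+2j:\,j=0,1,\dots,n\}},\qquad\{\psi^{(n)}(u)^b_c\}_{b\in\{c-n+2j:\,j=0,1,\dots,n\}}$$ is a linearly independent subset of $(\mathbb{C}^2)^{\otimes n}$.
   Context: Fix $\alpha,s,t\in\mathbb{C}$. $\mathbb{C}^2$ has basis $e_1,e_2$; vectors are columns of coordinates. For integers $l$ define $\psi^{(1)}(u)^l_{l+1}=\begin{pmatrix}1\\ \alpha(u-l-t)\end{pmatrix}$, $\psi^{(1)}(u)^l_{l-1}=\begin{pmatrix}1\\ \alpha(u+l+s)\end{pmatrix}$, $\psi^{(1)}(u)^a_b=0$ if $|a-b|\neq1$. $\Pi_{1\ldots n}$ is the symmetrizer on $(\mathbb{C}^2)^{\otimes n}$, $\Pi_{1\ldots n}e_{i_1}\otimes\cdots\otimes e_{i_n}=\frac1{n!}\sum_{\sigma\in S_n}e_{i_{\sigma(1)}}\otimes\cdots\otimes e_{i_{\sigma(n)}}$. For $a,b\in\mathbb{Z}$ the fused intertwining vector is $\psi^{(n)}(u)^a_b=\Pi_{1\ldots n}\,\psi^{(1)}(u+n-1)^{c_0}_{c_1}\otimes\cdots\otimes\psi^{(1)}(u+1)^{c_{n-2}}_{c_{n-1}}\otimes\psi^{(1)}(u)^{c_{n-1}}_{c_n}$, with $c_0=a$, $c_n=b$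 and any integers $c_1,\dots,c_{n-1}$ with $|c_{i+1}-c_i|=1$ (the result does not depend on this choice); it is $0$ if $b-a\notin\{-n,-n+2,\dots,n\}$. *)

theory Defs
  imports Complex_Main "HOL-Combinatorics.Permutations"
begin

text \<open>A vector of C^2 is a pair (x, y), meaning the column (x; y) = x e1 + y e2.
  Component selection: False selects e1, True selects e2.\<close>
definition comp2 :: "complex \<times> complex \<Rightarrow> bool \<Rightarrow> complex" where
  "comp2 v i = (if i then snd v else fst v)"

text \<open>An element of the n-fold tensor power of C^2 is represented by its coordinate
  function on index words (bool lists of length n); it is 0 on words of other length.\<close>
type_synonym tensor = "bool list \<Rightarrow> complex"

definition tens :: "(complex \<times> complex) list \<Rightarrow> tensor" where
  "tens vs = (\<lambda>is. if length is = length vs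
       then (\<Prod>k<length vs. comp2 (vs ! k) (is ! k)) else 0)"

definition symmetrizer :: "nat \<Rightarrow> tensor \<Rightarrow> tensor" where
  "symmetrizer n T = (\<lambda>is. (1 / of_nat (fact n)) *
      (\<Sum>\<sigma>\<in>{\<sigma>. \<sigma> permutes {..<n}}. T (map (\<lambda>k. is ! \<sigma> k) [0..<length is])))"

definition psi1 :: "complex \<Rightarrow> complex \<Rightarrow> complex \<Rightarrow> complex \<Rightarrow> int \<Rightarrow> int \<Rightarrow> complex \<times> complex" where
  "psi1 \<alpha> s t u a b =
     (if b = a + 1 then (1, \<alpha> * (u - of_int a - t))
      else if b = a - 1 then (1, \<alpha> * (u + of_int a + s))
      else (0, 0))"

definition admissible_path :: "nat \<Rightarrow> int \<Rightarrow> int \<Rightarrow> (nat \<Rightarrow> int) \<Rightarrow> bool" where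
  "admissible_path n a b c \<longleftrightarrow> c 0 = a \<and> c n = b \<and> (\<forall>i<n. \<bar>c (Suc i) - c i\<bar> = 1)"

definition psi_path :: "complex \<Rightarrow> complex \<Rightarrow> complex \<Rightarrow> nat \<Rightarrow> complex \<Rightarrow> (nat \<Rightarrow> int) \<Rightarrow> tensor" where
  "psi_path \<alpha> s t n u c = symmetrizer n
     (tens (map (\<lambda>k. psi1 \<alpha> s t (u + of_nat (n - 1 - k)) (c k) (c (Suc k))) [0..<n]))"

definition psi_n :: "complex \<Rightarrow> complex \<Rightarrow> complex \<Rightarrow> nat \<Rightarrow> complex \<Rightarrow> int \<Rightarrow> int \<Rightarrow> tensor" where
  "psi_n \<alpha> s t n u a b =
     (if \<exists>c. admissible_path n a b c
      then psi_path \<alpha> s t n u (SOME c. admissible_path n a b c) else (\<lambda>_. 0))"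

end

theory Submission
  imports Defs
begin

text \<open>Pair every vector with the symmetric tensor \<open>(y, 1/\<alpha>)\<^sup>\<otimes>\<^sup>n\<close>. This pairing does not see
  the symmetrizer and factorises over the tensor factors, so along any admissible path from
  \<open>a\<close> to \<open>a - n + 2m\<close> the fused vector pairs to the polynomial
  \<open>\<Prod>i<m. (y + A - 2i) \<cdot> \<Prod>i<n-m. (y + C - 2i)\<close> in \<open>y\<close>, with \<open>A, C\<close> depending only on \<open>a\<close>.
  Evaluated at suitable roots of one of the two factors, these polynomials form a triangular
  system whose diagonal entries do not vanish because \<open>(s + t)/2 \<notin> \<int>\<close>.\<close>

definition dot2 :: "complex \<times> complex \<Rightarrow> complex \<times> complex \<Rightarrow> complex" where
  "dot2 v w = fst v * fst w + snd v * snd w"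

definition power_pairing :: "nat \<Rightarrow> complex \<times> complex \<Rightarrow> tensor \<Rightarrow> complex" where
  "power_pairing n v T = (\<Sum>is | length is = n. T is * (\<Prod>k<n. comp2 v (is ! k)))"

definition ffact2 :: "complex \<Rightarrow> nat \<Rightarrow> complex" where
  "ffact2 X m = (\<Prod>i<m. X - 2 * of_nat i)"

lemma ffact2_Suc: "ffact2 X (Suc m) = X * ffact2 (X - 2) m"
  unfolding ffact2_def prod.lessThan_Suc_shift by (simp add: algebra_simps)

lemma ffact2_eq_0_iff: "ffact2 X m = 0 \<longleftrightarrow> (\<exists>i<m. X = 2 * of_nat i)"
  by (auto simp: ffact2_def)

lemma ffact2_nonzero_if_half_not_Ints: "X / 2 \<notin> \<int> \<Longrightarrow> ffact2 X m \<noteq> 0"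
  by (auto simp: ffact2_eq_0_iff)

lemma of_int_add_not_Ints: "(w::complex) \<notin> \<int> \<Longrightarrow> of_int z + w \<notin> \<int>"
  by (metis Ints_diff Ints_of_int add_diff_cancel_left')

lemma sum_bool_lists_prod:
  fixes g :: "nat \<Rightarrow> bool \<Rightarrow> 'a::comm_semiring_1"
  shows "(\<Sum>is | length is = n. \<Prod>k<n. g k (is ! k)) = (\<Prod>k<n. g k False + g k True)"
proof (induction n arbitrary: g)
  case 0
  have "{is::bool list. length is = 0} = {[]}" by auto
  then show ?case by simp
next
  case (Suc n)
  have lists_Suc: "{is::bool list. length is = Suc n} = (\<lambda>(b, is). b # is) ` (UNIV \<times> {is. length is = n})"
    by (auto simp: length_Suc_conv image_iff)
  have inj: "inj_on (\<lambda>(b, is). b # is) (UNIV \<times> {is::bool list. length is = n})"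
    by (auto simp: inj_on_def)
  have "(\<Sum>is | length is = Suc n. \<Prod>k<Suc n. g k (is ! k))
      = (\<Sum>b\<in>UNIV. \<Sum>is | length is = n. g 0 b * (\<Prod>k<n. g (Suc k) (is ! k)))"
    unfolding lists_Suc sum.reindex[OF inj]
    by (simp add: sum.cartesian_product case_prod_unfold prod.lessThan_Suc_shift del: prod.lessThan_Suc)
  also have "\<dots> = (\<Sum>b\<in>UNIV. g 0 b * (\<Prod>k<n. g (Suc k) False + g (Suc k) True))"
    by (simp add: sum_distrib_left[symmetric] Suc.IH[of "\<lambda>k. g (Suc k)"])
  also have "\<dots> = (\<Prod>k<Suc n. g k False + g k True)"
    by (simp add: UNIV_bool prod.lessThan_Suc_shift algebra_simps del: prod.lessThan_Suc)
  finally show ?case .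
qed

lemma power_pairing_tens:
  "length vs = n \<Longrightarrow> power_pairing n v (tens vs) = (\<Prod>k<n. dot2 v (vs ! k))"
proof -
  assume len: "length vs = n"
  have "power_pairing n v (tens vs) = (\<Sum>is | length is = n. \<Prod>k<n. comp2 (vs ! k) (is ! k) * comp2 v (is ! k))"
    unfolding power_pairing_def tens_def using len by (intro sum.cong) (auto simp: prod.distrib)
  also have "\<dots> = (\<Prod>k<n. dot2 v (vs ! k))"
    using sum_bool_lists_prod[of "\<lambda>k b. comp2 (vs ! k) b * comp2 v b" n]
    by (simp add: comp2_def dot2_def algebra_simps)
  finally show ?thesis .
qed

lemma power_pairing_permute:
  assumes \<sigma>: "\<sigma> permutes {..<n}"
  shows "(\<Sum>is | length is = n. T (map (\<lambda>k. is ! \<sigma> k) [0..<n]) * (\<Prod>k<n. comp2 v (is ! k)))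
       = power_pairing n v T"
  unfolding power_pairing_def
proof (rule sum.reindex_bij_witness[where i="\<lambda>is. map (\<lambda>k. is ! inv \<sigma> k) [0..<n]"
      and j="\<lambda>is. map (\<lambda>k. is ! \<sigma> k) [0..<n]"])
  have in_range: "\<sigma> k < n" "inv \<sigma> k < n" if "k < n" for k
    using that \<sigma> permutes_in_image permutes_inv by fastforce+
  show "map (\<lambda>k. map (\<lambda>k. is ! \<sigma> k) [0..<n] ! inv \<sigma> k) [0..<n] = is"
       "map (\<lambda>k. map (\<lambda>k. is ! inv \<sigma> k) [0..<n] ! \<sigma> k) [0..<n] = is"
    if "is \<in> {is. length is = n}" for "is"
    using that in_range by (auto simp: list_eq_iff_nth_eq permutes_inverses[OF \<sigma>])
  show "map (\<lambda>k. is ! \<sigma> k) [0..<n] \<in> {is. length is = n}"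
       "map (\<lambda>k. is ! inv \<sigma> k) [0..<n] \<in> {is. length is = n}" for "is"
    by simp_all
  show "T (map (\<lambda>k. is ! \<sigma> k) [0..<n]) * (\<Prod>k<n. comp2 v (map (\<lambda>k. is ! \<sigma> k) [0..<n] ! k))
      = T (map (\<lambda>k. is ! \<sigma> k) [0..<n]) * (\<Prod>k<n. comp2 v (is ! k))" for "is"
    using prod.permute[OF \<sigma>, of "\<lambda>k. comp2 v (is ! k)"] by simp
qed

lemma power_pairing_symmetrizer: "power_pairing n v (symmetrizer n T) = power_pairing n v T"
proof -
  let ?P = "{\<sigma>. \<sigma> permutes {..<n}}"
  have "power_pairing n v (symmetrizer n T) = (1 / of_nat (fact n)) *
      (\<Sum>\<sigma>\<in>?P. \<Sum>is | length is = n. T (map (\<lambda>k. is ! \<sigma> k) [0..<n]) * (\<Prod>k<n. comp2 v (is ! k)))"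
    unfolding power_pairing_def symmetrizer_def
    by (simp add: sum_distrib_left sum_distrib_right sum.swap[of _ ?P] mult.assoc)
  also have "\<dots> = (1 / of_nat (fact n)) * (\<Sum>\<sigma>\<in>?P. power_pairing n v T)"
    by (simp add: power_pairing_permute)
  also have "\<dots> = power_pairing n v T"
    by (simp add: card_permutations)
  finally show ?thesis .
qed

lemma power_pairing_linear:
  "power_pairing n v (\<lambda>is. \<Sum>j\<in>J. g j * F j is) = (\<Sum>j\<in>J. g j * power_pairing n v (F j))"
  unfolding power_pairing_def
  by (simp add: sum_distrib_left sum_distrib_right sum.swap[of _ J] mult.assoc)

lemma dot2_psi1_up:
  "\<alpha> \<noteq> 0 \<Longrightarrow> dot2 (y, 1 / \<alpha>) (psi1 \<alpha> s t u a (a + 1)) = y + u - of_int a - t"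
  by (simp add: dot2_def psi1_def)

lemma dot2_psi1_down:
  "\<alpha> \<noteq> 0 \<Longrightarrow> dot2 (y, 1 / \<alpha>) (psi1 \<alpha> s t u a (a - 1)) = y + u + of_int a + s"
  by (simp add: dot2_def psi1_def)

lemma admissible_path_factor_product:
  assumes "\<alpha> \<noteq> 0" and "admissible_path n a b c"
  shows "\<exists>m\<le>n. b = a - int n + 2 * int m \<and>
    (\<Prod>k<n. dot2 (y, 1 / \<alpha>) (psi1 \<alpha> s t (u + of_nat (n - 1 - k)) (c k) (c (Suc k))))
      = ffact2 (y + u + of_nat n - 1 - of_int a - t) m * ffact2 (y + u + of_nat n - 1 + of_int a + s) (n - m)"
  using assms(2)
proof (induction n arbitrary: a c)
  case 0
  then show ?case by (auto simp: admissible_path_def ffact2_def)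
next
  case (Suc n)
  let ?F = "\<lambda>n k. dot2 (y, 1 / \<alpha>) (psi1 \<alpha> s t (u + of_nat (n - 1 - k)) (c k) (c (Suc k)))"
  have "admissible_path n (c 1) b (c \<circ> Suc)"
    using Suc.prems by (auto simp: admissible_path_def)
  from Suc.IH[OF this] obtain m where m: "m \<le> n" "b = c 1 - int n + 2 * int m"
    and tail: "(\<Prod>k<n. ?F (Suc n) (Suc k))
      = ffact2 (y + u + of_nat n - 1 - of_int (c 1) - t) m * ffact2 (y + u + of_nat n - 1 + of_int (c 1) + s) (n - m)"
    by auto
  define X where "X = y + u + of_nat (Suc n) - 1 - of_int a - t"
  define Z where "Z = y + u + of_nat (Suc n) - 1 + of_int a + s"
  have split: "(\<Prod>k<Suc n. ?F (Suc n) k) = ?F (Suc n) 0 * (\<Prod>k<n. ?F (Suc n) (Suc k))"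
    by (simp add: prod.lessThan_Suc_shift del: prod.lessThan_Suc)
  have "c 0 = a" "\<bar>c 1 - a\<bar> = 1"
    using Suc.prems by (auto simp: admissible_path_def)
  then consider "c 0 = a" "c 1 = a + 1" | "c 0 = a" "c 1 = a - 1" by linarith
  then show ?case
  proof cases
    case 1
    then have "?F (Suc n) 0 = X"
      using dot2_psi1_up[OF assms(1)] by (simp add: X_def)
    moreover have "ffact2 (y + u + of_nat n - 1 - of_int (c 1) - t) m = ffact2 (X - 2) m"
      "ffact2 (y + u + of_nat n - 1 + of_int (c 1) + s) (n - m) = ffact2 Z (Suc n - Suc m)"
      using 1 by (simp_all add: X_def Z_def algebra_simps)
    ultimately have "(\<Prod>k<Suc n. ?F (Suc n) k) = ffact2 X (Suc m) * ffact2 Z (Suc n - Suc m)"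
      using split tail by (simp add: ffact2_Suc)
    then show ?thesis
      using m 1 by (intro exI[of _ "Suc m"]) (simp add: X_def Z_def)
  next
    case 2
    then have "?F (Suc n) 0 = Z"
      using dot2_psi1_down[OF assms(1)] by (simp add: Z_def)
    moreover have "ffact2 (y + u + of_nat n - 1 - of_int (c 1) - t) m = ffact2 X m"
      "ffact2 (y + u + of_nat n - 1 + of_int (c 1) + s) (n - m) = ffact2 (Z - 2) (n - m)"
      unfolding 2(2) by (simp_all add: X_def Z_def algebra_simps)
    moreover have "Suc n - m = Suc (n - m)" using m by simp
    ultimately have "(\<Prod>k<Suc n. ?F (Suc n) k) = ffact2 X m * ffact2 Z (Suc n - m)"
      using split tail by (simp add: ffact2_Suc)
    then show ?thesis
      using m 2 by (intro exI[of _ m]) (simp add: X_def Z_def)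
  qed
qed

lemma admissible_path_exists: "j \<le> n \<Longrightarrow> \<exists>c. admissible_path n a (a - int n + 2 * int j) c"
  by (rule exI[of _ "\<lambda>k. if k \<le> j then a + int k else a + 2 * int j - int k"])
     (auto simp: admissible_path_def)

lemma power_pairing_psi_n:
  assumes "\<alpha> \<noteq> 0" and "j \<le> n"
  shows "power_pairing n (y, 1 / \<alpha>) (psi_n \<alpha> s t n u a (a - int n + 2 * int j))
    = ffact2 (y + u + of_nat n - 1 - of_int a - t) j * ffact2 (y + u + of_nat n - 1 + of_int a + s) (n - j)"
proof -
  let ?b = "a - int n + 2 * int j"
  have ex: "\<exists>c. admissible_path n a ?b c" using admissible_path_exists[OF assms(2)] .
  let ?c = "SOME c. admissible_path n a ?b c"
  have "psi_n \<alpha> s t n u a ?b = psi_path \<alpha> s t n u ?c"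
    using ex by (simp add: psi_n_def)
  moreover have "power_pairing n v (psi_path \<alpha> s t n u ?c)
      = (\<Prod>k<n. dot2 v (psi1 \<alpha> s t (u + of_nat (n - 1 - k)) (?c k) (?c (Suc k))))" for v
    unfolding psi_path_def power_pairing_symmetrizer by (simp add: power_pairing_tens)
  moreover note admissible_path_factor_product[OF assms(1) someI_ex[OF ex], of y s t u]
  ultimately show ?thesis by auto
qed

lemma triangular_family_independent:
  fixes f :: "nat \<Rightarrow> 'a \<Rightarrow> 'b::idom"
  assumes vanish: "\<And>k. k \<le> n \<Longrightarrow> (\<Sum>j\<le>n. lam j * f j (x k)) = 0"
    and lower: "\<And>j k. k < j \<Longrightarrow> j \<le> n \<Longrightarrow> f j (x k) = 0"
    and diagonal: "\<And>k. k \<le> n \<Longrightarrow> f k (x k) \<noteq> 0"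
  shows "\<forall>j\<le>n. lam j = 0"
proof (intro allI impI)
  fix j assume "j \<le> n"
  then show "lam j = 0"
  proof (induction j rule: less_induct)
    case (less k)
    have "lam j * f j (x k) = 0" if "j \<in> {..n} - {k}" for j
    proof -
      from that consider "j < k" | "k < j" "j \<le> n" by fastforce
      then show ?thesis using less lower by cases auto
    qed
    then have "(\<Sum>j\<in>{..n} - {k}. lam j * f j (x k)) = 0"
      by (rule sum.neutral[OF ballI])
    then have "lam k * f k (x k) = 0"
      using vanish[OF less.prems] less.prems by (simp add: sum.remove[of _ k])
    then show ?case using diagonal[OF less.prems] by simp
  qed
qed

lemma psi_n_fixed_start_independent:
  assumes "\<alpha> \<noteq> 0" and "(s + t) / 2 \<notin> \<int>"
    and "\<forall>is. (\<Sum>j\<le>n. lam j * psi_n \<alpha> s t n u a (a - int n + 2 * int j) is) = 0"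
  shows "\<forall>j\<le>n. lam j = 0"
proof -
  define A where "A = u + of_nat n - 1 - of_int a - t"
  define f where "f j y = power_pairing n (y, 1 / \<alpha>) (psi_n \<alpha> s t n u a (a - int n + 2 * int j))" for j y
  have f: "f j y = ffact2 (y + A) j * ffact2 (y + A + 2 * of_int a + s + t) (n - j)" if "j \<le> n" for j y
    using power_pairing_psi_n[OF assms(1) that] by (simp add: f_def A_def algebra_simps)
  \<comment> \<open>the roots \<open>2k - A\<close> of \<open>ffact2 (y + A) j\<close> with \<open>k < j\<close>\<close>
  show ?thesis
  proof (rule triangular_family_independent[of n lam f "\<lambda>k. 2 * of_nat k - A"])
    have "(\<lambda>is. \<Sum>j\<le>n. lam j * psi_n \<alpha> s t n u a (a - int n + 2 * int j) is) = (\<lambda>_. 0)"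
      using assms(3) by auto
    then show "(\<Sum>j\<le>n. lam j * f j y) = 0" for y
      unfolding f_def power_pairing_linear[symmetric] by (simp add: power_pairing_def)
    show "f j (2 * of_nat k - A) = 0" if "k < j" "j \<le> n" for j k
      using that by (auto simp: f ffact2_eq_0_iff)
    show "f k (2 * of_nat k - A) \<noteq> 0" if "k \<le> n" for k
    proof -
      have "(2 * of_nat k + 2 * of_int a + s + t) / 2 = of_int (int k + a) + (s + t) / 2"
        by (simp add: field_simps)
      then have "ffact2 (2 * of_nat k + 2 * of_int a + s + t) (n - k) \<noteq> 0"
        using of_int_add_not_Ints[OF assms(2)] by (metis ffact2_nonzero_if_half_not_Ints)
      moreover have "ffact2 (2 * of_nat k) k \<noteq> 0"
        by (auto simp: ffact2_eq_0_iff)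
      ultimately show ?thesis
        using that by (simp add: f algebra_simps)
    qed
  qed
qed

lemma psi_n_fixed_end_independent:
  assumes "\<alpha> \<noteq> 0" and "(s + t) / 2 \<notin> \<int>"
    and "\<forall>is. (\<Sum>j\<le>n. lam j * psi_n \<alpha> s t n u (c - int n + 2 * int j) c is) = 0"
  shows "\<forall>j\<le>n. lam j = 0"
proof -
  define C where "C = u - 1 + of_int c + s"
  define f where "f j y = power_pairing n (y, 1 / \<alpha>) (psi_n \<alpha> s t n u (c - int n + 2 * int j) c)" for j y
  have f: "f j y = ffact2 (y + C + 2 * of_nat j) j
      * ffact2 (y + C + 2 * of_nat n - 2 * of_nat j - 2 * of_int c - s - t) (n - j)" if "j \<le> n" for j y
  proof -
    have "c = (c - int n + 2 * int j) - int n + 2 * int (n - j)" "n - j \<le> n"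
      using that by simp_all
    then show ?thesis
      using power_pairing_psi_n[OF assms(1) \<open>n - j \<le> n\<close>, where a="c - int n + 2 * int j" and y=y and s=s and t=t and u=u] that
      by (simp add: f_def C_def of_nat_diff algebra_simps mult.commute)
  qed
  \<comment> \<open>the roots \<open>-C - 2(k + 1)\<close> of \<open>ffact2 (y + C + 2j) j\<close> with \<open>k < j\<close>\<close>
  show ?thesis
  proof (rule triangular_family_independent[of n lam f "\<lambda>k. - C - 2 * of_nat k - 2"])
    have "(\<lambda>is. \<Sum>j\<le>n. lam j * psi_n \<alpha> s t n u (c - int n + 2 * int j) c is) = (\<lambda>_. 0)"
      using assms(3) by auto
    then show "(\<Sum>j\<le>n. lam j * f j y) = 0" for y
      unfolding f_def power_pairing_linear[symmetric] by (simp add: power_pairing_def)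
    show "f j (- C - 2 * of_nat k - 2) = 0" if "k < j" "j \<le> n" for j k
      using that by (auto simp: f ffact2_eq_0_iff intro!: exI[of _ "j - k - 1"] simp: of_nat_diff)
    show "f k (- C - 2 * of_nat k - 2) \<noteq> 0" if "k \<le> n" for k
    proof -
      have "- (2 * of_nat n - 4 * of_nat k - 2 * of_int c - s - t - 2) / 2
          = of_int (2 * int k + c + 1 - int n) + (s + t) / 2"
        by (simp add: field_simps)
      then have "- (2 * of_nat n - 4 * of_nat k - 2 * of_int c - s - t - 2) / 2 \<notin> \<int>"
        using of_int_add_not_Ints[OF assms(2)] by metis
      then have "ffact2 (2 * of_nat n - 4 * of_nat k - 2 * of_int c - s - t - 2) (n - k) \<noteq> 0"
        by (metis ffact2_nonzero_if_half_not_Ints Ints_minus minus_divide_left)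
      moreover have "ffact2 (- 2) k \<noteq> 0"
        by (auto simp: ffact2_eq_0_iff dest: arg_cong[where f=Re])
      ultimately show ?thesis
        using that by (simp add: f algebra_simps)
    qed
  qed
qed

theorem proposition6:
  fixes \<alpha> s t :: complex
  assumes "\<alpha> \<noteq> 0" and "(s + t) / 2 \<notin> \<int>"
  shows "\<forall>n::nat. n > 0 \<longrightarrow> (\<forall>(u::complex) (a::int) (c::int).
     (\<forall>lam::nat \<Rightarrow> complex.
        (\<forall>is. (\<Sum>j\<le>n. lam j * psi_n \<alpha> s t n u a (a - int n + 2 * int j) is) = 0)
        \<longrightarrow> (\<forall>j\<le>n. lam j = 0)) \<and>
     (\<forall>lam::nat \<Rightarrow> complex.
        (\<forall>is. (\<Sum>j\<le>n. lam j * psi_n \<alpha> s t n u (c - int n + 2 * int j) c is) = 0)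
        \<longrightarrow> (\<forall>j\<le>n. lam j = 0)))"
  using psi_n_fixed_start_independent[OF assms] psi_n_fixed_end_independent[OF assms] by blast

end
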